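(* Let $K(u)\in\mathrm{End}(\mathbb C^d\otimes\mathbb C^{d_B})$ be an irreducible K-matrix in the representation $(\rho^{(1)},\rho^{(2)})$ with asymptotic expansion $K(u)=\tilde\kappa+O(u^{-1})$, $\tilde\kappa\in\mathrm{End}(\mathbb C^d\otimes\mathbb C^{d_B})$. Then $\tilde\kappa=\kappa\otimes1$ for some $\kappa\in\mathrm{End}(\mathbb C^d)$.
   Context: Let $\mathfrak g$ be a complex simple Lie algebra with basis $\{X_A\}$, Killing form $B_{AB}=\mathrm{Tr}(\mathrm{ad}_{X_A}\circ\mathrm{ad}_{X_B})$ and inverse $B^{AB}$ (repeated indices summed). Let $\rho^{(1)},\rho^{(2)}:\mathfrak g\to\mathrm{End}(\mathbb C^d)$ be faithful representations and $C^{(ij)}=B^{AB}\rho^{(i)}(X_A)\otimes\rho^{(j)}(X_B)$. For $i,j\in\{1,2\}$ let $R^{(ij)}(u)\in\mathrm{End}(\mathbb C^d\otimes\mathbb C^d)$ be quasi-classical R-matrices: they satisfy $R^{(ij)}_{12}(u)R^{(ik)}_{13}(u+v)R^{(jk)}_{23}(v)=R^{(jk)}_{23}(v)R^{(ik)}_{13}(u+v)R^{(ij)}_{12}(u)$ and $R^{(ij)}(u)=1+\frac1u C^{(ij)}+O(u^{-2})$ as $u\to\infty$. Lower indices denote tensor factors of $\mathbb C^d\otimes\mathbb C^d\otimes\mathbb C^{d_B}$, and $R_{21}=P_{12}R_{12}P_{12}$ with $P$ the flip. A K-matrix in the representation $(\rho^{(1)},\rho^{(2)})$ with boundary space $\mathbb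 C^{d_B}$ is $K(u)\in\mathrm{End}(\mathbb C^d\otimes\mathbb C^{d_B})$, with an asymptotic expansion in powers of $1/u$, satisfying the boundary Yang–Baxter equation $R^{(11)}_{12}(u-v)K_{13}(u)R^{(12)}_{21}(u+v)K_{23}(v)=K_{23}(v)R^{(12)}_{12}(u+v)K_{13}(u)R^{(22)}_{21}(u-v)$. Writing $K(u)=\sum_{i,j}E_{ij}\otimes\Psi^{ij}(u)$ with $E_{ij}$ the elementary matrices of $\mathrm{End}(\mathbb C^d)$ and $\Psi^{ij}(u)\in\mathrm{End}(\mathbb C^{d_B})$, $K$ is irreducible if there is no proper nonzero subspace of $\mathbb C^{d_B}$ invariant under all $\Psi^{ij}(u)$ (all $i,j$ and $u$). *)

theory Defs
  imports Complex_Main "HOL-Library.Landau_Symbols"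
begin

text \<open>Operators on a finite-dimensional space with basis indexed by a finite type 'i:
  an element of End(C^I) is a complex matrix indexed by 'i. Tensor products of spaces
  correspond to product index types.\<close>

type_synonym 'i op = "'i \<Rightarrow> 'i \<Rightarrow> complex"

definition mmul :: "('i::finite) op \<Rightarrow> 'i op \<Rightarrow> 'i op" where
  "mmul M N = (\<lambda>x y. \<Sum>z\<in>UNIV. M x z * N z y)"

definition idm :: "'i op" where
  "idm = (\<lambda>x y. if x = y then 1 else 0)"

definition mv :: "('i::finite) op \<Rightarrow> ('i \<Rightarrow> complex) \<Rightarrow> ('i \<Rightarrow> complex)" where
  "mv M v = (\<lambda>x. \<Sum>y\<in>UNIV. M x y * v y)"

text \<open>Lie algebra with basis X_A (A :: 'a) and structure constants
  [X_A, X_B] = sum_C f A B C X_C; elements are coordinate vectors 'a => complex.\<close>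

definition lie_bracket :: "('a::finite \<Rightarrow> 'a \<Rightarrow> 'a \<Rightarrow> complex) \<Rightarrow> ('a \<Rightarrow> complex) \<Rightarrow> ('a \<Rightarrow> complex) \<Rightarrow> ('a \<Rightarrow> complex)" where
  "lie_bracket f x y = (\<lambda>C. \<Sum>A\<in>UNIV. \<Sum>B\<in>UNIV. x A * y B * f A B C)"

definition is_lie_algebra :: "('a::finite \<Rightarrow> 'a \<Rightarrow> 'a \<Rightarrow> complex) \<Rightarrow> bool" where
  "is_lie_algebra f \<longleftrightarrow>
     (\<forall>A B C. f A B C = - f B A C) \<and>
     (\<forall>A B C E. (\<Sum>D\<in>UNIV. f A B D * f D C E + f B C D * f D A E + f C A D * f D B E) = 0)"

definition lie_ideal :: "('a::finite \<Rightarrow> 'a \<Rightarrow> 'a \<Rightarrow> complex) \<Rightarrow> ('a \<Rightarrow> complex) set \<Rightarrow> bool" where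
  "lie_ideal f I \<longleftrightarrow>
     (\<lambda>_. 0) \<in> I \<and>
     (\<forall>x\<in>I. \<forall>y\<in>I. (\<lambda>A. x A + y A) \<in> I) \<and>
     (\<forall>c. \<forall>x\<in>I. (\<lambda>A. c * x A) \<in> I) \<and>
     (\<forall>x. \<forall>y\<in>I. lie_bracket f x y \<in> I)"

definition simple_lie_algebra :: "('a::finite \<Rightarrow> 'a \<Rightarrow> 'a \<Rightarrow> complex) \<Rightarrow> bool" where
  "simple_lie_algebra f \<longleftrightarrow>
     is_lie_algebra f \<and>
     (\<exists>x y. lie_bracket f x y \<noteq> (\<lambda>_. 0)) \<and>
     (\<forall>I. lie_ideal f I \<longrightarrow> I = {\<lambda>_. 0} \<or> I = UNIV)"

text \<open>Killing form B_AB = Tr(ad X_A o ad X_B), where (ad X_A)_{DC} = f A C D.\<close>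

definition killing :: "('a::finite \<Rightarrow> 'a \<Rightarrow> 'a \<Rightarrow> complex) \<Rightarrow> 'a op" where
  "killing f = (\<lambda>A B. \<Sum>C\<in>UNIV. \<Sum>D\<in>UNIV. f A C D * f B D C)"

definition killing_inv :: "('a::finite \<Rightarrow> 'a \<Rightarrow> 'a \<Rightarrow> complex) \<Rightarrow> 'a op" where
  "killing_inv f = (SOME M. mmul M (killing f) = idm \<and> mmul (killing f) M = idm)"

definition is_rep :: "('a::finite \<Rightarrow> 'a \<Rightarrow> 'a \<Rightarrow> complex) \<Rightarrow> ('a \<Rightarrow> ('d::finite) op) \<Rightarrow> bool" where
  "is_rep f \<rho> \<longleftrightarrow>
     (\<forall>A B x y. mmul (\<rho> A) (\<rho> B) x y - mmul (\<rho> B) (\<rho> A) x y = (\<Sum>C\<in>UNIV. f A B C * \<rho> C x y))"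

definition faithful :: "('a::finite \<Rightarrow> ('d::finite) op) \<Rightarrow> bool" where
  "faithful \<rho> \<longleftrightarrow> (\<forall>c. (\<forall>x y. (\<Sum>A\<in>UNIV. c A * \<rho> A x y) = 0) \<longrightarrow> (\<forall>A. c A = 0))"

definition casimir :: "('a::finite \<Rightarrow> 'a \<Rightarrow> 'a \<Rightarrow> complex) \<Rightarrow> ('a \<Rightarrow> ('d::finite) op) \<Rightarrow> ('a \<Rightarrow> 'd op) \<Rightarrow> ('d \<times> 'd) op" where
  "casimir f \<rho>1 \<rho>2 = (\<lambda>(x1, x2) (y1, y2).
      \<Sum>A\<in>UNIV. \<Sum>B\<in>UNIV. killing_inv f A B * \<rho>1 A x1 y1 * \<rho>2 B x2 y2)"

text \<open>Embeddings of operators into a triple tensor product (lower indices 12, 13, 23)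
  and the flip conjugation R_21 = P R P.\<close>

definition op12 :: "('x \<times> 'y) op \<Rightarrow> ('x \<times> 'y \<times> 'z) op" where
  "op12 M = (\<lambda>(a, b, c) (a', b', c'). M (a, b) (a', b') * (if c = c' then 1 else 0))"

definition op13 :: "('x \<times> 'z) op \<Rightarrow> ('x \<times> 'y \<times> 'z) op" where
  "op13 M = (\<lambda>(a, b, c) (a', b', c'). M (a, c) (a', c') * (if b = b' then 1 else 0))"

definition op23 :: "('y \<times> 'z) op \<Rightarrow> ('x \<times> 'y \<times> 'z) op" where
  "op23 M = (\<lambda>(a, b, c) (a', b', c'). M (b, c) (b', c') * (if a = a' then 1 else 0))"

definition flip :: "('x \<times> 'x) op \<Rightarrow> ('x \<times> 'x) op" where
  "flip R = (\<lambda>(a, b) (a', b'). R (b, a) (b', a'))"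

text \<open>Quasi-classical R-matrices R^{(ij)}(u), i,j in {1,2}, defined away from a finite
  set SR of spectral parameters (poles).\<close>

definition quasi_classical_R_family ::
  "('a::finite \<Rightarrow> 'a \<Rightarrow> 'a \<Rightarrow> complex) \<Rightarrow> (nat \<Rightarrow> 'a \<Rightarrow> ('d::finite) op)
   \<Rightarrow> (nat \<Rightarrow> nat \<Rightarrow> complex \<Rightarrow> ('d \<times> 'd) op) \<Rightarrow> complex set \<Rightarrow> bool" where
  "quasi_classical_R_family f \<rho> R SR \<longleftrightarrow>
     finite SR \<and>
     (\<forall>i\<in>{1,2}. \<forall>j\<in>{1,2}. \<forall>k\<in>{1,2}. \<forall>u v. u \<notin> SR \<longrightarrow> v \<notin> SR \<longrightarrow> u + v \<notin> SR \<longrightarrow>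
        mmul (mmul (op12 (R i j u)) (op13 (R i k (u + v)))) (op23 (R j k v))
        = (mmul (mmul (op23 (R j k v)) (op13 (R i k (u + v)))) (op12 (R i j u))
             :: ('d \<times> 'd \<times> 'd) op)) \<and>
     (\<forall>i\<in>{1,2}. \<forall>j\<in>{1,2}. \<forall>x y.
        (\<lambda>u. R i j u x y - (idm x y + casimir f (\<rho> i) (\<rho> j) x y / u))
          \<in> O[at_infinity](\<lambda>u. 1 / u ^ 2))"

definition has_asymp_expansion :: "(complex \<Rightarrow> 'i op) \<Rightarrow> (nat \<Rightarrow> 'i op) \<Rightarrow> bool" where
  "has_asymp_expansion F c \<longleftrightarrow>
     (\<forall>N x y. (\<lambda>u. F u x y - (\<Sum>n\<le>N. c n x y / u ^ n)) \<in> O[at_infinity](\<lambda>u. 1 / u ^ Suc N))"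

text \<open>K-matrix in representation (rho1, rho2), boundary space indexed by 'b, defined away
  from a finite set SK; satisfies the boundary Yang-Baxter equation on
  C^d (x) C^d (x) C^{d_B}.\<close>

definition K_matrix ::
  "(nat \<Rightarrow> nat \<Rightarrow> complex \<Rightarrow> (('d::finite) \<times> 'd) op) \<Rightarrow> complex set
   \<Rightarrow> (complex \<Rightarrow> ('d \<times> ('b::finite)) op) \<Rightarrow> complex set \<Rightarrow> bool" where
  "K_matrix R SR K SK \<longleftrightarrow>
     finite SK \<and>
     (\<exists>c. has_asymp_expansion K c) \<and>
     (\<forall>u v. u \<notin> SK \<longrightarrow> v \<notin> SK \<longrightarrow> u - v \<notin> SR \<longrightarrow> u + v \<notin> SR \<longrightarrow>
        mmul (mmul (mmul (op12 (R 1 1 (u - v))) (op13 (K u))) (op12 (flip (R 1 2 (u + v)))))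
             (op23 (K v))
        = (mmul (mmul (mmul (op23 (K v)) (op12 (R 1 2 (u + v)))) (op13 (K u)))
             (op12 (flip (R 2 2 (u - v)))) :: ('d \<times> 'd \<times> 'b) op))"

definition csubspace :: "('i \<Rightarrow> complex) set \<Rightarrow> bool" where
  "csubspace W \<longleftrightarrow> (\<lambda>_. 0) \<in> W \<and>
     (\<forall>x\<in>W. \<forall>y\<in>W. (\<lambda>i. x i + y i) \<in> W) \<and> (\<forall>c. \<forall>x\<in>W. (\<lambda>i. c * x i) \<in> W)"

text \<open>Psi^{ij}(u)_{kl} = K(u)_{(i,k),(j,l)}; irreducible = no proper nonzero invariant subspace.\<close>

definition K_irreducible :: "(complex \<Rightarrow> (('d::finite) \<times> ('b::finite)) op) \<Rightarrow> complex set \<Rightarrow> bool" where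
  "K_irreducible K SK \<longleftrightarrow>
     \<not> (\<exists>W. csubspace W \<and> W \<noteq> {\<lambda>_. 0} \<and> W \<noteq> UNIV \<and>
          (\<forall>u. u \<notin> SK \<longrightarrow> (\<forall>i j. \<forall>w\<in>W. mv (\<lambda>k l. K u (i, k) (j, l)) w \<in> W)))"

end

theory Submission
  imports Defs "Jordan_Normal_Form.Spectral_Radius"
begin

(* Let u tend to infinity in the boundary Yang-Baxter equation at fixed v. All R-matrices tend
   to the identity and K(u) tends to \<kappa>t, so the equation degenerates to the statement that
   \<kappa>t acting on factors 1,3 commutes with K(v) acting on factors 2,3. Read blockwise, every
   block of \<kappa>t (an operator on the boundary space) commutes with all \<Psi>^{ij}(v); as these act
   irreducibly, Schur's lemma makes each block a scalar multiple of the identity.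
   Only the leading term 1 of the R-matrices enters. *)

lemma tendsto_of_bigo_diff:
  fixes f h :: "_ \<Rightarrow> 'b::real_normed_field"
  assumes "(\<lambda>x. f x - h x) \<in> O[F](g)" and "(g \<longlongrightarrow> 0) F" and "(h \<longlongrightarrow> c) F"
  shows "(f \<longlongrightarrow> c) F"
proof -
  obtain C where "eventually (\<lambda>x. norm (f x - h x) \<le> C * norm (g x)) F"
    using assms(1) by (elim landau_o.bigE)
  then have "eventually (\<lambda>x. norm (f x - h x) \<le> norm (g x) * C) F"
    by (simp add: mult.commute)
  then have "((\<lambda>x. f x - h x) \<longlongrightarrow> 0) F"
    by (rule tendsto_0_le[OF assms(2)])
  from tendsto_add[OF this assms(3)] show ?thesis by simp
qed

lemma eventually_add_notin_finite_at_infinity: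
  fixes S :: "'a::real_normed_vector set"
  assumes "finite S"
  shows "\<forall>\<^sub>F u in at_infinity. u + c \<notin> S"
proof -
  have "\<forall>\<^sub>F u in at_infinity. u + c \<noteq> s" for s
    unfolding eventually_at_infinity
  proof (intro exI allI impI)
    fix u :: 'a assume "norm s + norm c + 1 \<le> norm u"
    then show "u + c \<noteq> s" using norm_triangle_ineq4[of "u + c" c] by auto
  qed
  then have "\<forall>\<^sub>F u in at_infinity. \<forall>s\<in>S. u + c \<noteq> s"
    using assms by (intro eventually_ball_finite) auto
  then show ?thesis by (rule eventually_mono) blast
qed

definition op_tendsto :: "('x \<Rightarrow> 'i op) \<Rightarrow> 'i op \<Rightarrow> 'x filter \<Rightarrow> bool" where
  "op_tendsto F M G \<longleftrightarrow> (\<forall>x y. ((\<lambda>u. F u x y) \<longlongrightarrow> M x y) G)"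

lemma op_tendsto_const: "op_tendsto (\<lambda>_. M) M G"
  unfolding op_tendsto_def by simp

lemma op_tendsto_mmul:
  "op_tendsto F M G \<Longrightarrow> op_tendsto H N G \<Longrightarrow> op_tendsto (\<lambda>u. mmul (F u) (H u)) (mmul M N) G"
  unfolding op_tendsto_def mmul_def by (auto intro!: tendsto_sum tendsto_mult)

lemma op_tendsto_op12: "op_tendsto F M G \<Longrightarrow> op_tendsto (\<lambda>u. op12 (F u)) (op12 M) G"
  unfolding op_tendsto_def op12_def by (auto intro!: tendsto_mult)

lemma op_tendsto_op13: "op_tendsto F M G \<Longrightarrow> op_tendsto (\<lambda>u. op13 (F u)) (op13 M) G"
  unfolding op_tendsto_def op13_def by (auto intro!: tendsto_mult)

lemma op_tendsto_op23: "op_tendsto F M G \<Longrightarrow> op_tendsto (\<lambda>u. op23 (F u)) (op23 M) G"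
  unfolding op_tendsto_def op23_def by (auto intro!: tendsto_mult)

lemma op_tendsto_flip: "op_tendsto F M G \<Longrightarrow> op_tendsto (\<lambda>u. flip (F u)) (flip M) G"
  unfolding op_tendsto_def flip_def by auto

lemma op_tendsto_shift:
  fixes F :: "'a::real_normed_vector \<Rightarrow> 'i op"
  assumes "op_tendsto F M at_infinity"
  shows "op_tendsto (\<lambda>u. F (u + c)) M at_infinity" and "op_tendsto (\<lambda>u. F (u - c)) M at_infinity"
proof -
  have shift: "filterlim (\<lambda>u. u + c) at_infinity at_infinity" for c :: 'a
    using tendsto_add_filterlim_at_infinity'[OF filterlim_ident tendsto_const] .
  have plus: "op_tendsto (\<lambda>u. F (u + d)) M at_infinity" for d
    using assms filterlim_compose[OF _ shift] unfolding op_tendsto_def by blast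
  show "op_tendsto (\<lambda>u. F (u + c)) M at_infinity"
    by (rule plus)
  from plus[of "- c"] show "op_tendsto (\<lambda>u. F (u - c)) M at_infinity"
    by simp
qed

lemma op_tendsto_unique:
  assumes "G \<noteq> bot" and "op_tendsto F M G" and "op_tendsto H N G"
    and "\<forall>\<^sub>F u in G. F u = H u"
  shows "M = N"
proof (intro ext)
  fix x y
  have "\<forall>\<^sub>F u in G. F u x y = H u x y"
    using assms(4) by (rule eventually_mono) simp
  moreover have "((\<lambda>u. F u x y) \<longlongrightarrow> M x y) G"
    using assms(2) unfolding op_tendsto_def by blast
  ultimately have "((\<lambda>u. H u x y) \<longlongrightarrow> M x y) G"
    by (rule tendsto_cong[THEN iffD1])
  then show "M x y = N x y"
    using assms(1,3) tendsto_unique unfolding op_tendsto_def by blast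
qed

lemma mmul_idm_left [simp]: "mmul idm M = (M :: ('i::finite) op)"
  unfolding mmul_def idm_def by (simp flip: of_bool_def)

lemma mmul_idm_right [simp]: "mmul M idm = (M :: ('i::finite) op)"
  unfolding mmul_def idm_def by (simp flip: of_bool_def)

lemma op12_idm [simp]: "op12 idm = idm"
  unfolding op12_def idm_def by (auto intro!: ext)

lemma flip_idm [simp]: "flip idm = idm"
  unfolding flip_def idm_def by (auto intro!: ext)

lemma mv_mmul: "mv M (mv N w) = mv (mmul M N) (w :: ('i::finite) \<Rightarrow> complex)"
  unfolding mv_def mmul_def
  by (auto simp: sum_distrib_left sum_distrib_right mult.assoc intro!: ext sum.swap)

lemma ex_eigenvector: "\<exists>\<mu> w. w \<noteq> (\<lambda>_. 0) \<and> mv M w = (\<lambda>x. \<mu> * w x)"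
  for M :: "('i::finite) op"
proof -
  define n where "n = card (UNIV :: 'i set)"
  obtain h where h: "bij_betw h {0..<n} (UNIV :: 'i set)"
    using ex_bij_betw_nat_finite[of "UNIV :: 'i set"] unfolding n_def by auto
  define g where "g = inv_into {0..<n} h"
  have g_lt: "g k < n" and h_g: "h (g k) = k" for k
    using bij_betw_inv_into[OF h] bij_betw_inv_into_right[OF h] unfolding g_def
    by (auto simp: bij_betw_def)
  have g_h: "g (h i) = i" if "i < n" for i
    using bij_betw_inv_into_left[OF h] that unfolding g_def by simp
  define A where "A = mat n n (\<lambda>(i, j). M (h i) (h j))"
  have A: "A \<in> carrier_mat n n"
    unfolding A_def by simp
  obtain \<mu> where "eigenvalue A \<mu>"
    using spectrum_non_empty[OF A] unfolding n_def spectrum_def by fastforce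
  then obtain v where v: "v \<in> carrier_vec n" "v \<noteq> 0\<^sub>v n" "A *\<^sub>v v = \<mu> \<cdot>\<^sub>v v"
    unfolding eigenvalue_def eigenvector_def using A by auto
  define w where "w = (\<lambda>k. v $ g k)"
  have "mv M w k = \<mu> * w k" for k
  proof -
    have "mv M w k = (\<Sum>j\<in>{0..<n}. M (h (g k)) (h j) * v $ j)"
      unfolding mv_def w_def h_g
      by (simp add: sum.reindex_bij_betw[OF h, symmetric] g_h)
    also have "\<dots> = (A *\<^sub>v v) $ g k"
      unfolding A_def using v(1) g_lt[of k] by (simp add: mult_mat_vec_def scalar_prod_def)
    also have "\<dots> = \<mu> * w k"
      unfolding w_def using v g_lt[of k] by simp
    finally show ?thesis .
  qed
  moreover have "w \<noteq> (\<lambda>_. 0)"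
  proof
    assume "w = (\<lambda>_. 0)"
    then have "v $ i = 0" if "i < n" for i
      using g_h[OF that] unfolding w_def by metis
    then have "v = 0\<^sub>v n"
      using v(1) by (intro eq_vecI) auto
    with v(2) show False ..
  qed
  ultimately show ?thesis by blast
qed

definition irreducible_ops :: "('i::finite) op set \<Rightarrow> bool" where
  "irreducible_ops S \<longleftrightarrow>
     \<not> (\<exists>W. csubspace W \<and> W \<noteq> {\<lambda>_. 0} \<and> W \<noteq> UNIV \<and> (\<forall>P\<in>S. \<forall>w\<in>W. mv P w \<in> W))"

lemma schur_lemma:
  fixes M :: "('i::finite) op"
  assumes "irreducible_ops S" and "\<And>P. P \<in> S \<Longrightarrow> mmul M P = mmul P M"
  shows "\<exists>c. M = (\<lambda>k l. c * idm k l)"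
proof -
  obtain \<mu> w where w: "w \<noteq> (\<lambda>_. 0)" "mv M w = (\<lambda>x. \<mu> * w x)"
    using ex_eigenvector by blast
  define E where "E = {w. mv M w = (\<lambda>x. \<mu> * w x)}"
  have "csubspace E"
    unfolding csubspace_def E_def mv_def
    by (simp add: fun_eq_iff algebra_simps sum.distrib flip: sum_distrib_left)
  moreover have "E \<noteq> {\<lambda>_. 0}"
    using w unfolding E_def by auto
  moreover have "mv P e \<in> E" if "P \<in> S" and "e \<in> E" for P e
  proof -
    have "mv M (mv P e) = mv P (mv M e)"
      using assms(2)[OF \<open>P \<in> S\<close>] by (simp add: mv_mmul)
    also have "\<dots> = mv P (\<lambda>x. \<mu> * e x)"
      using \<open>e \<in> E\<close> unfolding E_def by simp
    also have "\<dots> = (\<lambda>x. \<mu> * mv P e x)"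
      unfolding mv_def by (simp add: sum_distrib_left algebra_simps)
    finally show ?thesis
      unfolding E_def by simp
  qed
  ultimately have "E = UNIV"
    using assms(1) unfolding irreducible_ops_def by blast
  then have "mv M (\<lambda>x. idm x l) = (\<lambda>x. \<mu> * idm x l)" for l
    unfolding E_def by blast
  then have "M k l = \<mu> * idm k l" for k l
    unfolding mv_def idm_def by (simp add: fun_eq_iff if_distrib cong: if_cong)
  then show ?thesis by blast
qed

(* The first component is summed innermost so that the Kronecker deltas of op13 and op23
   collapse by sum.delta. *)
lemma sum_UNIV_pair: "(\<Sum>z\<in>UNIV. g z) = (\<Sum>b\<in>UNIV. \<Sum>a\<in>UNIV. g (a, b))"
  for g :: "('x::finite \<times> 'y::finite) \<Rightarrow> 'c::comm_monoid_add"
  by (subst sum.swap) (simp add: sum.cartesian_product split_def flip: UNIV_Times_UNIV)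

lemma op13_op23_commute_blocks:
  fixes T P :: "('d::finite \<times> 'b::finite) op"
  assumes "(mmul (op13 T) (op23 P) :: ('d \<times> 'd \<times> 'b) op) = mmul (op23 P) (op13 T)"
  shows "mmul (\<lambda>k l. T (a, k) (a', l)) (\<lambda>k l. P (i, k) (j, l))
       = mmul (\<lambda>k l. P (i, k) (j, l)) (\<lambda>k l. T (a, k) (a', l))"
proof (intro ext)
  fix k l
  have "mmul (op13 T) (op23 P) (a, i, k) (a', j, l) = mmul (op23 P) (op13 T) (a, i, k) (a', j, l)"
    using assms by simp
  then show "mmul (\<lambda>k l. T (a, k) (a', l)) (\<lambda>k l. P (i, k) (j, l)) k l
           = mmul (\<lambda>k l. P (i, k) (j, l)) (\<lambda>k l. T (a, k) (a', l)) k l"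
    unfolding mmul_def op13_def op23_def
    by (simp add: sum_UNIV_pair if_distrib[where f="\<lambda>x. _ * x"] if_distrib[where f="\<lambda>x. x * _"]
        sum.delta sum.delta' cong: if_cong)
qed

lemma K_irreducible_iff_irreducible_ops:
  "K_irreducible K SK \<longleftrightarrow> irreducible_ops {(\<lambda>k l. K u (i, k) (j, l)) | u i j. u \<notin> SK}"
  unfolding K_irreducible_def irreducible_ops_def by blast

lemma commutes_with_irreducible_K_imp_tensor_idm:
  fixes K :: "complex \<Rightarrow> ('d::finite \<times> 'b::finite) op" and T :: "('d \<times> 'b) op"
  assumes "K_irreducible K SK"
    and "\<And>v. v \<notin> SK \<Longrightarrow>
      (mmul (op13 T) (op23 (K v)) :: ('d \<times> 'd \<times> 'b) op) = mmul (op23 (K v)) (op13 T)"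
  shows "\<exists>\<kappa>. \<forall>a b a' b'. T (a, b) (a', b') = \<kappa> a a' * (if b = b' then 1 else 0)"
proof -
  have "\<exists>c. (\<lambda>k l. T (a, k) (a', l)) = (\<lambda>k l. c * idm k l)" for a a'
    using assms(1) unfolding K_irreducible_iff_irreducible_ops
    by (rule schur_lemma) (auto intro: op13_op23_commute_blocks assms(2))
  then obtain \<kappa> where "\<And>a a'. (\<lambda>k l. T (a, k) (a', l)) = (\<lambda>k l. \<kappa> a a' * idm k l)"
    by metis
  then show ?thesis
    unfolding idm_def by metis
qed

lemma quasi_classical_R_tendsto_idm:
  assumes "quasi_classical_R_family f \<rho> R SR" and "i \<in> {1, 2}" and "j \<in> {1, 2}"
  shows "op_tendsto (R i j) idm at_infinity"
  unfolding op_tendsto_def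
proof (intro allI)
  fix x y
  have "(\<lambda>u. R i j u x y - (idm x y + casimir f (\<rho> i) (\<rho> j) x y / u))
      \<in> O[at_infinity](\<lambda>u. 1 / u ^ 2)"
    using assms unfolding quasi_classical_R_family_def by blast
  moreover have "((\<lambda>u::complex. 1 / u ^ 2) \<longlongrightarrow> 0) at_infinity"
    by (intro tendsto_divide_0[OF tendsto_const] filterlim_power_at_infinity filterlim_ident) simp
  moreover have "((\<lambda>u. idm x y + casimir f (\<rho> i) (\<rho> j) x y / u) \<longlongrightarrow> idm x y + 0) at_infinity"
    by (intro tendsto_add tendsto_const tendsto_divide_0[OF tendsto_const filterlim_ident])
  ultimately show "((\<lambda>u. R i j u x y) \<longlongrightarrow> idm x y) at_infinity"
    by (auto intro: tendsto_of_bigo_diff)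
qed

lemma K_matrix_leading_term_commutes:
  fixes K :: "complex \<Rightarrow> ('d::finite \<times> 'b::finite) op"
  assumes "K_matrix R SR K SK" and "finite SR"
    and R: "\<And>i j. i \<in> {1, 2} \<Longrightarrow> j \<in> {1, 2} \<Longrightarrow> op_tendsto (R i j) idm at_infinity"
    and K: "op_tendsto K \<kappa> at_infinity" and "v \<notin> SK"
  shows "mmul (op13 \<kappa>) (op23 (K v)) = (mmul (op23 (K v)) (op13 \<kappa>) :: ('d \<times> 'd \<times> 'b) op)"
proof (rule op_tendsto_unique)
  let ?lhs = "\<lambda>u. mmul (mmul (mmul (op12 (R 1 1 (u - v))) (op13 (K u)))
      (op12 (flip (R 1 2 (u + v))))) (op23 (K v)) :: ('d \<times> 'd \<times> 'b) op"
  let ?rhs = "\<lambda>u. mmul (mmul (mmul (op23 (K v)) (op12 (R 1 2 (u + v)))) (op13 (K u)))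
      (op12 (flip (R 2 2 (u - v)))) :: ('d \<times> 'd \<times> 'b) op"
  show "(at_infinity :: complex filter) \<noteq> bot"
    by (simp add: trivial_limit_def eventually_at_infinity) (metis norm_of_real abs_ge_self)
  show "op_tendsto ?lhs (mmul (op13 \<kappa>) (op23 (K v))) at_infinity"
    using op_tendsto_mmul[OF op_tendsto_mmul[OF op_tendsto_mmul
        [OF op_tendsto_op12[OF op_tendsto_shift(2)[OF R]] op_tendsto_op13[OF K]]
        op_tendsto_op12[OF op_tendsto_flip[OF op_tendsto_shift(1)[OF R]]]] op_tendsto_const]
    by simp
  show "op_tendsto ?rhs (mmul (op23 (K v)) (op13 \<kappa>)) at_infinity"
    using op_tendsto_mmul[OF op_tendsto_mmul[OF op_tendsto_mmul
        [OF op_tendsto_const op_tendsto_op12[OF op_tendsto_shift(1)[OF R]]] op_tendsto_op13[OF K]]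
        op_tendsto_op12[OF op_tendsto_flip[OF op_tendsto_shift(2)[OF R]]]]
    by simp
  have "\<forall>\<^sub>F u in at_infinity. u + 0 \<notin> SK \<and> u + - v \<notin> SR \<and> u + v \<notin> SR"
    using assms(1,2) unfolding K_matrix_def
    by (intro eventually_conj eventually_add_notin_finite_at_infinity) auto
  then show "\<forall>\<^sub>F u in at_infinity. ?lhs u = ?rhs u"
    by (rule eventually_mono) (use assms(1,5) in \<open>simp add: K_matrix_def\<close>)
qed

theorem corollary14:
  fixes f :: "'a::finite \<Rightarrow> 'a \<Rightarrow> 'a \<Rightarrow> complex"
    and \<rho> :: "nat \<Rightarrow> 'a \<Rightarrow> ('d::finite) op"
    and R :: "nat \<Rightarrow> nat \<Rightarrow> complex \<Rightarrow> ('d \<times> 'd) op"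
    and SR SK :: "complex set"
    and K :: "complex \<Rightarrow> ('d \<times> ('b::finite)) op"
    and \<kappa>t :: "('d \<times> 'b) op"
  assumes "simple_lie_algebra f"
    and "\<forall>i\<in>{1,2}. is_rep f (\<rho> i) \<and> faithful (\<rho> i)"
    and "quasi_classical_R_family f \<rho> R SR"
    and "K_matrix R SR K SK"
    and "K_irreducible K SK"
    and "\<forall>x y. (\<lambda>u. K u x y - \<kappa>t x y) \<in> O[at_infinity](\<lambda>u. 1 / u)"
  shows "\<exists>\<kappa> :: 'd op. \<forall>a b a' b'. \<kappa>t (a, b) (a', b') = \<kappa> a a' * (if b = b' then 1 else 0)"
proof -
  have "finite SR"
    using assms(3) unfolding quasi_classical_R_family_def by blast
  have "op_tendsto K \<kappa>t at_infinity"
    unfolding op_tendsto_def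
    by (intro allI tendsto_of_bigo_diff[OF assms(6)[rule_format] _ tendsto_const]
        tendsto_divide_0[OF tendsto_const filterlim_ident])
  then have "mmul (op13 \<kappa>t) (op23 (K v)) = (mmul (op23 (K v)) (op13 \<kappa>t) :: ('d \<times> 'd \<times> 'b) op)"
    if "v \<notin> SK" for v
    using K_matrix_leading_term_commutes[OF assms(4) \<open>finite SR\<close>
        quasi_classical_R_tendsto_idm[OF assms(3)]] that
    by blast
  then show ?thesis
    using commutes_with_irreducible_K_imp_tensor_idm[OF assms(5)] by blast
qed

end
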